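(* Suppose $x\in X$ has $\deg(x)=i<\infty$ and fix any integer $n>i$. Then for every $m\geq0$ we have $\min_{j\geq m}\deg\big(T^j(x)_n\big)\leq i+1$.
   Context: Paths and cycles: a graph is $G=(V,E)$ with $V$ finite and $E\subset V\times V$. A path is a finite sequence of vertices $(u_0,\dots,u_L)$ with $(u_j,u_{j+1})\in E$; its length is $|\cdot|=L$; a cycle is a path with $u_0=u_L$. For paths where one ends where the next starts, $+$ denotes concatenation and $a\,c$ means the cycle $c$ traversed $a$ times. Construction: $G_0=(V_0,E_0)$ with $V_0=\{v_{0,0}\}$, $E_0=\{e_{0,0}\}$, $e_{0,0}=(v_{0,0},v_{0,0})$. For $n\geq1$, $G_n=(V_n,E_n)$ consists of a vertex $v_{n,0}$, the loop $e_{n,0}=(v_{n,0},v_{n,0})$, and $n$ cycles $c_{n,1},\dots,c_{n,n}$, each starting and ending at $v_{n,0}$, whose vertices other than $v_{n,0}$ are pairwise distinct (within each cycle and across cycles); $V_n$ is the set of all these vertices and $E_n$ consists of $e_{n,0}$ and the edges of the cycles. The maps $\varphi_n\colon V_{n+1}\to V_n$ and the lengths of the cycles $c_{n+1,i}$ are defined together: $\varphi_n(v_{n+1,0})=v_{n,0}$, and for each $i$ a path $P_{n,i}$ in $G_n$ from $v_{n,0}$ to $v_{n,0}$ is given; $c_{n+1,i}$ has length $|P_{n,i}|$ and $\varphi_n$ maps its $j$-th vertex to the $j$-th vertex of $P_{n,i}$ (written $\varphi_n(c_{n+1,i})=P_{n,i}$). The paths are: $P_{0,1}=10\,e_{0,0}$;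 for $n\geq1$: $P_{n,i}=e_{n,0}+2c_{n,i}+2c_{n,i+1}+\dots+2c_{n,n}+e_{n,0}$ for $2\leq i\leq n$; $P_{n,n+1}=(n+2)^2\big(\sum_{i=1}^n|c_{n,i}|\big)\,e_{n,0}$; and $P_{n,1}=(1\,e_{n,0}+2c_{n,1})+(2\,e_{n,0}+2c_{n,1})+\dots+(k_n\,e_{n,0}+2c_{n,1})+e_{n,0}+2c_{n,2}+\dots+2c_{n,n}+e_{n,0}$, where $k_n=2\big(1+\sum_{i=1}^n|c_{n,i}|\big)$. Let $X=\{x\in\prod_{n\geq0}V_n:\varphi_n(x_{n+1})=x_n\ \forall n\}$ with metric $d(x,y)=2^{-\min\{i:x_i\neq y_i\}}$ ($d(x,x)=0$); $X$ is a compact zero-dimensional metric space, and $T\colon X\to X$ defined by $T(x)=y$ iff $(x_n,y_n)\in E_n$ for all $n$ is a well-defined homeomorphism. Write $x_n$ for the $n$-th coordinate of $x$. Degree: for $v\in V_n$, $\deg(v)=+\infty$ if $v=v_{n,0}$ and $\deg(v)=i$ if $v$ is a vertex of $c_{n,i}$ different from $v_{n,0}$; for $x\in X$, $\deg(x)=\min_n\deg(x_n)$. *)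

theory Defs
  imports Main "HOL-Library.Extended_Nat"
begin

text \<open>Vertex encoding: in G_n the base vertex v_{n,0} is (0,0); the j-th vertex
(1 <= j < |c_{n,i}|) of the cycle c_{n,i} is (i,j).  A closed path from v_{n,0}
of length L is encoded by its list of the first L vertices (the final v_{n,0}
is omitted), so concatenation of closed paths is list append and |P| = length.\<close>

type_synonym vtx = "nat \<times> nat"

definition base :: vtx where "base = (0,0)"

definition cw :: "(nat \<Rightarrow> nat) \<Rightarrow> nat \<Rightarrow> vtx list" where
  "cw l i = base # map (\<lambda>j. (i,j)) [1..<l i]"

definition Pw :: "nat \<Rightarrow> (nat \<Rightarrow> nat) \<Rightarrow> nat \<Rightarrow> vtx list" where
  "Pw n l i =
    (if n = 0 then (if i = 1 then replicate 10 base else [])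
     else
       (let S = (\<Sum>k=1..n. l k); kn = 2 * (1 + S) in
        if i = n + 1 then replicate ((n+2)^2 * S) base
        else if 2 \<le> i \<and> i \<le> n then
          [base] @ concat (map (\<lambda>k. cw l k @ cw l k) [i..<n+1]) @ [base]
        else if i = 1 then
          concat (map (\<lambda>a. replicate a base @ cw l 1 @ cw l 1) [1..<kn+1])
          @ [base] @ concat (map (\<lambda>k. cw l k @ cw l k) [2..<n+1]) @ [base]
        else []))"

text \<open>lenf n i = |c_{n,i}| (for 1 <= i <= n).\<close>
primrec lenf :: "nat \<Rightarrow> nat \<Rightarrow> nat" where
  "lenf 0 = (\<lambda>i. 0)"
| "lenf (Suc n) = (\<lambda>i. length (Pw n (lenf n) i))"

definition Vs :: "nat \<Rightarrow> vtx set" where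
  "Vs n = insert base {(i,j). 1 \<le> i \<and> i \<le> n \<and> 1 \<le> j \<and> j < lenf n i}"

definition Es :: "nat \<Rightarrow> (vtx \<times> vtx) set" where
  "Es n = insert (base, base)
     {(cw (lenf n) i ! j, cw (lenf n) i ! (Suc j mod length (cw (lenf n) i))) | i j.
        1 \<le> i \<and> i \<le> n \<and> j < length (cw (lenf n) i)}"

definition phi :: "nat \<Rightarrow> vtx \<Rightarrow> vtx" where
  "phi n v = (if v = base then base else Pw n (lenf n) (fst v) ! snd v)"

definition Xs :: "(nat \<Rightarrow> vtx) set" where
  "Xs = {x. \<forall>n. x n \<in> Vs n \<and> phi n (x (Suc n)) = x n}"

definition Tmap :: "(nat \<Rightarrow> vtx) \<Rightarrow> (nat \<Rightarrow> vtx)" where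
  "Tmap x = (THE y. y \<in> Xs \<and> (\<forall>n. (x n, y n) \<in> Es n))"

definition degv :: "vtx \<Rightarrow> enat" where
  "degv v = (if v = base then \<infinity> else enat (fst v))"

definition degX :: "(nat \<Rightarrow> vtx) \<Rightarrow> enat" where
  "degX x = (INF n. degv (x n))"

end

theory Submission
  imports Defs
begin

text \<open>Since \<open>deg x = i\<close>, from some level \<open>K\<close> on every coordinate \<open>x_k\<close> lies on the cycle
  \<open>c_{k,i}\<close>, and the number of steps before \<open>x_k\<close> returns to \<open>v_{k,0}\<close> grows strictly with \<open>k\<close>.
  So at a level \<open>M \<ge> n\<close> high enough, the orbit of \<open>x\<close> runs along \<open>c_{M+1,i}\<close> for at least \<open>m\<close>
  steps, while its image in \<open>G_M\<close> follows \<open>P_{M,i}\<close>; after its last passage through \<open>c_{M,i}\<close> this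
  path enters \<open>c_{M,i+1}\<close>. From the first vertex of \<open>c_{M,i+1}\<close> every further step of \<open>T\<close> carries
  this entry point one level down, until the orbit reaches a vertex of degree \<open>i+1\<close> at level \<open>n\<close>.\<close>

lemma length_cw: "1 \<le> l a \<Longrightarrow> length (cw l a) = l a"
  by (simp add: cw_def)

lemma nth_cw_0 [simp]: "cw l a ! 0 = base"
  by (simp add: cw_def)

lemma nth_cw: "1 \<le> j \<Longrightarrow> j < l a \<Longrightarrow> cw l a ! j = (a, j)"
  by (simp add: cw_def nth_Cons')

lemma set_cw: "set (cw l a) \<subseteq> insert base {v. fst v = a}"
  by (auto simp: cw_def)

lemma pair_neq_base [simp]: "1 \<le> a \<Longrightarrow> (a, j) \<noteq> base" "1 \<le> a \<Longrightarrow> base \<noteq> (a, j)"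
  by (auto simp: base_def)

lemma lenf_ge_2: "1 \<le> a \<Longrightarrow> a \<le> k \<Longrightarrow> 2 \<le> lenf k a"
proof (induction k arbitrary: a)
  case 0
  then show ?case by simp
next
  case (Suc k)
  show ?case
  proof (cases "k = 0")
    case True
    then show ?thesis using Suc.prems by (simp add: Pw_def)
  next
    case k: False
    have "2 \<le> lenf k 1" using Suc.IH[of 1] k by simp
    also have "lenf k 1 \<le> (\<Sum>j=1..k. lenf k j)" using k by (intro member_le_sum) auto
    finally have S: "2 \<le> (\<Sum>j=1..k. lenf k j)" .
    show ?thesis
    proof (cases "a = Suc k")
      case True
      have "(\<Sum>j=1..k. lenf k j) \<le> (k+2)^2 * (\<Sum>j=1..k. lenf k j)" by simp
      with S have "2 \<le> (k+2)^2 * (\<Sum>j=1..k. lenf k j)" by linarith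
      then show ?thesis using True k by (simp add: Pw_def Let_def)
    next
      case False
      then show ?thesis using k Suc.prems by (auto simp: Pw_def Let_def)
    qed
  qed
qed

lemma length_cw_lenf [simp]: "1 \<le> a \<Longrightarrow> a \<le> k \<Longrightarrow> length (cw (lenf k) a) = lenf k a"
  using lenf_ge_2 length_cw by (metis le_trans one_le_numeral)

lemma nth_cw_lenf_1: "1 \<le> a \<Longrightarrow> a \<le> k \<Longrightarrow> cw (lenf k) a ! 1 = (a, 1)"
  using lenf_ge_2[of a k] nth_cw[of 1 "lenf k" a] by simp

lemma Vs_iff:
  "v \<in> Vs k \<longleftrightarrow> v = base \<or> (1 \<le> fst v \<and> fst v \<le> k \<and> 1 \<le> snd v \<and> snd v < lenf k (fst v))"
  by (cases v) (auto simp: Vs_def)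

lemma base_in_Vs [simp]: "base \<in> Vs k"
  by (simp add: Vs_def)

lemma base_base_in_Es [simp]: "(base, base) \<in> Es k"
  by (simp add: Es_def)

lemma Es_cases:
  assumes "(v, w) \<in> Es k"
  shows "(v = base \<and> w = base) \<or>
    (\<exists>a j. 1 \<le> a \<and> a \<le> k \<and> j < lenf k a \<and>
       v = cw (lenf k) a ! j \<and> w = cw (lenf k) a ! (Suc j mod lenf k a))"
proof -
  from assms consider "(v, w) = (base, base)"
    | a j where "1 \<le> a" "a \<le> k" "j < length (cw (lenf k) a)"
        "v = cw (lenf k) a ! j" "w = cw (lenf k) a ! (Suc j mod length (cw (lenf k) a))"
    unfolding Es_def by blast
  then show ?thesis by cases auto
qed

lemma cycle_edge_in_Es:
  "1 \<le> a \<Longrightarrow> a \<le> k \<Longrightarrow> j < lenf k a \<Longrightarrow>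
   (cw (lenf k) a ! j, cw (lenf k) a ! (Suc j mod lenf k a)) \<in> Es k"
  unfolding Es_def by force

definition next_vtx :: "nat \<Rightarrow> vtx \<Rightarrow> vtx" where
  "next_vtx k v =
    (if v = base then base else if Suc (snd v) < lenf k (fst v) then (fst v, Suc (snd v)) else base)"

lemma cw_next:
  assumes "1 \<le> a" "a \<le> k" "1 \<le> j" "j < lenf k a"
  shows "cw (lenf k) a ! (Suc j mod lenf k a) = next_vtx k (a, j)"
proof (cases "Suc j < lenf k a")
  case True
  then show ?thesis using assms nth_cw[of "Suc j" "lenf k" a] by (simp add: next_vtx_def)
next
  case False
  then have "Suc j = lenf k a" using assms by simp
  then show ?thesis using assms by (simp add: next_vtx_def)
qed

lemma Es_from_nonbase:
  assumes "v \<noteq> base" "(v, w) \<in> Es k"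
  shows "w = next_vtx k v"
proof -
  from Es_cases[OF assms(2)] assms(1) obtain a j where
    a: "1 \<le> a" "a \<le> k" "j < lenf k a" and
    vw: "v = cw (lenf k) a ! j" "w = cw (lenf k) a ! (Suc j mod lenf k a)"
    by blast
  have "j \<noteq> 0" using vw(1) assms(1) by (metis nth_cw_0)
  then have "v = (a, j)" using a vw nth_cw by simp
  then show ?thesis using a vw cw_next \<open>j \<noteq> 0\<close> by simp
qed

lemma Es_from_base:
  assumes "(base, w) \<in> Es k"
  shows "w = base \<or> (\<exists>a. 1 \<le> a \<and> a \<le> k \<and> w = (a, 1))"
proof -
  have "w = (a, 1)"
    if "1 \<le> a" "a \<le> k" "j < lenf k a" "base = cw (lenf k) a ! j"
       "w = cw (lenf k) a ! (Suc j mod lenf k a)" for a j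
  proof -
    have "j = 0" using that nth_cw[of j "lenf k" a] by (cases "j = 0") auto
    then show ?thesis using that lenf_ge_2[OF that(1,2)] nth_cw_lenf_1[OF that(1,2)] by simp
  qed
  then show ?thesis using Es_cases[OF assms] by blast
qed

lemma next_vtx_in_Es:
  assumes "v \<in> Vs k" "v \<noteq> base"
  shows "(v, next_vtx k v) \<in> Es k"
proof -
  obtain a j where v: "v = (a, j)" "1 \<le> a" "a \<le> k" "1 \<le> j" "j < lenf k a"
    using assms by (cases v) (auto simp: Vs_iff)
  then show ?thesis
    using cycle_edge_in_Es[OF v(2,3,5)] cw_next[OF v(2-5)] nth_cw[of j "lenf k" a, OF v(4,5)] by simp
qed

lemma next_vtx_in_Vs: "v \<in> Vs k \<Longrightarrow> next_vtx k v \<in> Vs k"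
  by (auto simp: next_vtx_def Vs_iff)

definition closed_walk :: "nat \<Rightarrow> vtx list \<Rightarrow> bool" where
  "closed_walk k w \<longleftrightarrow>
     (\<forall>q<length w. w ! q \<in> Vs k \<and> (w ! q, (w @ [base]) ! Suc q) \<in> Es k) \<and>
     (w \<noteq> [] \<longrightarrow> hd w = base)"

lemma closed_walk_Nil [simp]: "closed_walk k []"
  by (simp add: closed_walk_def)

lemma closed_walk_append:
  assumes "closed_walk k w1" "closed_walk k w2"
  shows "closed_walk k (w1 @ w2)"
proof -
  have start2: "(w2 @ [base]) ! 0 = base" using assms(2) by (cases w2) (auto simp: closed_walk_def)
  have "(w1 @ w2) ! q \<in> Vs k \<and> ((w1 @ w2) ! q, (w1 @ w2 @ [base]) ! Suc q) \<in> Es k"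
    if q: "q < length (w1 @ w2)" for q
  proof (cases "q < length w1")
    case True
    have "(w1 @ w2 @ [base]) ! Suc q = (w1 @ [base]) ! Suc q"
      using True start2 by (cases "Suc q < length w1") (auto simp: nth_append)
    then show ?thesis using assms(1) True by (simp add: closed_walk_def nth_append)
  next
    case False
    then obtain q' where "q = length w1 + q'" "q' < length w2"
      using q by (metis add_diff_inverse_nat length_append nat_add_left_cancel_less)
    then show ?thesis using assms(2) by (simp add: closed_walk_def nth_append)
  qed
  moreover have "w1 @ w2 \<noteq> [] \<longrightarrow> hd (w1 @ w2) = base"
    using assms by (cases w1) (auto simp: closed_walk_def)
  ultimately show ?thesis by (simp add: closed_walk_def)
qed

lemma closed_walk_concat: "(\<And>w. w \<in> set ws \<Longrightarrow> closed_walk k w) \<Longrightarrow> closed_walk k (concat ws)"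
  by (induction ws) (auto intro: closed_walk_append)

lemma closed_walk_replicate_base: "closed_walk k (replicate n base)"
proof -
  have "(replicate n base @ [base]) ! Suc q = base" if "q < n" for q
    using that by (simp add: nth_append)
  then show ?thesis by (auto simp: closed_walk_def)
qed

lemma closed_walk_Cons_base: "closed_walk k w \<Longrightarrow> closed_walk k (base # w)"
  using closed_walk_append[OF closed_walk_replicate_base[of k 1]] by simp

lemma closed_walk_cw:
  assumes "1 \<le> a" "a \<le> k"
  shows "closed_walk k (cw (lenf k) a)"
proof -
  have "cw (lenf k) a ! q \<in> Vs k \<and> (cw (lenf k) a ! q, (cw (lenf k) a @ [base]) ! Suc q) \<in> Es k"
    if q: "q < lenf k a" for q
  proof -
    have "(cw (lenf k) a @ [base]) ! Suc q = cw (lenf k) a ! (Suc q mod lenf k a)"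
    proof (cases "Suc q < lenf k a")
      case False
      then have "Suc q = lenf k a" using q by simp
      then show ?thesis using assms by (simp add: nth_append)
    qed (use assms in \<open>simp add: nth_append\<close>)
    moreover have "cw (lenf k) a ! q \<in> Vs k"
      using q assms nth_cw[of q "lenf k" a] by (cases "q = 0") (auto simp: Vs_iff)
    ultimately show ?thesis using cycle_edge_in_Es[OF assms q] by simp
  qed
  moreover have "hd (cw (lenf k) a) = base" by (simp add: cw_def)
  ultimately show ?thesis using assms by (simp add: closed_walk_def)
qed

lemma closed_walk_in_Vs: "closed_walk k w \<Longrightarrow> v \<in> set w \<Longrightarrow> v \<in> Vs k"
  unfolding closed_walk_def by (metis in_set_conv_nth)

lemma closed_walk_nth_0: "closed_walk k w \<Longrightarrow> w \<noteq> [] \<Longrightarrow> w ! 0 = base"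
  by (simp add: closed_walk_def hd_conv_nth)

lemma closed_walk_edge:
  "closed_walk k w \<Longrightarrow> Suc q < length w \<Longrightarrow> (w ! q, w ! Suc q) \<in> Es k"
  unfolding closed_walk_def by (metis Suc_lessD nth_append)

text \<open>A walk can only leave a cycle through \<open>base\<close>, so once inside \<open>c_{k,a}\<close> it runs to the end
  of that cycle before the closing \<open>base\<close> of the walk.\<close>
lemma closed_walk_follows_cycle:
  assumes "closed_walk k w" "last w = base" "q < length w" "w ! q = (a, c)" "1 \<le> a"
    "c + t < lenf k a"
  shows "q + t < length w - 1 \<and> w ! (q + t) = (a, c + t)"
proof -
  have "w \<noteq> []" using assms(3) by auto
  then have last: "w ! (length w - 1) = base" using assms(2) by (metis last_conv_nth)
  from assms(6) show ?thesis
  proof (induction t)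
    case 0
    have "q \<noteq> length w - 1" using last assms(4,5) by auto
    then show ?case using assms(3,4) by simp
  next
    case (Suc t)
    then have IH: "q + t < length w - 1" "w ! (q + t) = (a, c + t)" by auto
    have "(w ! (q + t), w ! Suc (q + t)) \<in> Es k" using closed_walk_edge[OF assms(1)] IH(1) by simp
    then have "w ! Suc (q + t) = next_vtx k (w ! (q + t))"
      using Es_from_nonbase IH(2) assms(5) by simp
    then have step: "w ! Suc (q + t) = (a, Suc (c + t))"
      using IH(2) assms(5) Suc.prems by (simp add: next_vtx_def)
    have "Suc (q + t) \<noteq> length w - 1" using last step assms(5) by auto
    then show ?case using IH(1) step by simp
  qed
qed

text \<open>In the notation of the paper, \<open>double_cycles k a\<close> is \<open>2c_{k,a} + \<dots> + 2c_{k,k}\<close> and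
  \<open>Pw1_prefix k\<close> is \<open>(1 e_{k,0} + 2c_{k,1}) + \<dots> + (k_k e_{k,0} + 2c_{k,1})\<close>.\<close>
definition double_cycles :: "nat \<Rightarrow> nat \<Rightarrow> vtx list" where
  "double_cycles k a = concat (map (\<lambda>j. cw (lenf k) j @ cw (lenf k) j) [a..<k+1])"

definition Pw1_prefix :: "nat \<Rightarrow> vtx list" where
  "Pw1_prefix k = concat (map (\<lambda>b. replicate b base @ cw (lenf k) 1 @ cw (lenf k) 1)
                               [1..<2 * (1 + (\<Sum>j=1..k. lenf k j)) + 1])"

lemma double_cycles_Cons:
  "a \<le> k \<Longrightarrow> double_cycles k a = cw (lenf k) a @ cw (lenf k) a @ double_cycles k (Suc a)"
  unfolding double_cycles_def by (simp add: upt_conv_Cons del: upt_Suc)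

lemma set_double_cycles: "v \<in> set (double_cycles k a) \<Longrightarrow> v = base \<or> a \<le> fst v"
  unfolding double_cycles_def using set_cw by fastforce

lemma closed_walk_double_cycles: "1 \<le> a \<Longrightarrow> closed_walk k (double_cycles k a)"
  unfolding double_cycles_def by (intro closed_walk_concat) (auto intro!: closed_walk_append closed_walk_cw)

lemma Pw1_prefix_nth:
  assumes "1 \<le> k"
  shows "Pw1_prefix k ! 1 = base" "Pw1_prefix k ! 2 = (1, 1)" "2 < length (Pw1_prefix k)"
proof -
  have "[1..<2 * (1 + (\<Sum>j=1..k. lenf k j)) + 1] = 1 # [Suc 1..<2 * (1 + (\<Sum>j=1..k. lenf k j)) + 1]"
    by (rule upt_conv_Cons) simp
  then have "Pw1_prefix k = (base # cw (lenf k) 1 @ cw (lenf k) 1) @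
     concat (map (\<lambda>b. replicate b base @ cw (lenf k) 1 @ cw (lenf k) 1)
                 [Suc 1..<2 * (1 + (\<Sum>j=1..k. lenf k j)) + 1])"
    unfolding Pw1_prefix_def by (simp del: upt_Suc)
  moreover have "1 < length (cw (lenf k) 1)" using lenf_ge_2[of 1 k] assms by simp
  ultimately show "Pw1_prefix k ! 1 = base" "Pw1_prefix k ! 2 = (1, 1)" "2 < length (Pw1_prefix k)"
    using nth_cw_lenf_1[of 1 k] assms by (simp_all add: nth_append)
qed

lemma closed_walk_Pw1_prefix: "1 \<le> k \<Longrightarrow> closed_walk k (Pw1_prefix k)"
  unfolding Pw1_prefix_def
  by (intro closed_walk_concat)
    (auto simp del: upt_Suc intro!: closed_walk_append closed_walk_replicate_base closed_walk_cw)

lemma Pw_shapes: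
  assumes "1 \<le> a" "a \<le> Suc k"
  obtains N where "k = 0 \<or> a = Suc k" "Pw k (lenf k) a = replicate N base"
  | "a = 1" "1 \<le> k" "Pw k (lenf k) a = Pw1_prefix k @ [base] @ double_cycles k 2 @ [base]"
  | "2 \<le> a" "a \<le> k" "Pw k (lenf k) a = [base] @ double_cycles k a @ [base]"
proof -
  consider "k = 0" | "1 \<le> k" "a = Suc k" | "a = 1" "1 \<le> k" | "2 \<le> a" "a \<le> k"
    using assms by linarith
  then show thesis
  proof cases
    case 1
    then show thesis using assms by (intro that(1)[of 10]) (simp_all add: Pw_def)
  next
    case 2
    then show thesis by (intro that(1)[of "(k+2)^2 * (\<Sum>j=1..k. lenf k j)"]) (simp_all add: Pw_def Let_def)
  next
    case 3
    then show thesis by (intro that(2)) (simp_all add: Pw_def Let_def Pw1_prefix_def double_cycles_def)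
  next
    case 4
    then show thesis by (intro that(3)) (simp_all add: Pw_def Let_def double_cycles_def)
  qed
qed

lemma Pw_closed_walk:
  assumes "1 \<le> a" "a \<le> Suc k"
  shows "closed_walk k (Pw k (lenf k) a) \<and> last (Pw k (lenf k) a) = base \<and> Pw k (lenf k) a ! 1 = base"
proof -
  have len: "2 \<le> length (Pw k (lenf k) a)" using lenf_ge_2[OF assms] by simp
  have base: "closed_walk k [base]" by (simp add: closed_walk_Cons_base)
  from assms show ?thesis
  proof (cases rule: Pw_shapes)
    case (1 N)
    then show ?thesis using len by (simp add: closed_walk_replicate_base)
  next
    case 2
    then show ?thesis using Pw1_prefix_nth(1,3)[of k]
      by (simp add: closed_walk_append closed_walk_Cons_base closed_walk_Pw1_prefix closed_walk_double_cycles
        base nth_append)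
  next
    case 3
    have "double_cycles k a \<noteq> []" "double_cycles k a ! 0 = base"
      using 3 by (simp_all add: double_cycles_Cons cw_def)
    with 3 show ?thesis
      by (simp add: closed_walk_append closed_walk_Cons_base closed_walk_double_cycles base nth_append)
  qed
qed

lemma double_cycles_nth_1:
  "1 \<le> a \<Longrightarrow> a \<le> k \<Longrightarrow> double_cycles k a ! 1 = (a, 1) \<and> 1 < length (double_cycles k a)"
  using lenf_ge_2[of a k] nth_cw_lenf_1[of a k] by (simp add: double_cycles_Cons nth_append)

lemma Pw_nth_last:
  assumes "1 \<le> a" "a \<le> Suc k" "length (Pw k (lenf k) a) = Suc c"
  shows "Pw k (lenf k) a ! c = base"
proof -
  have "Pw k (lenf k) a \<noteq> []" using assms(3) by auto
  then have "last (Pw k (lenf k) a) = Pw k (lenf k) a ! (length (Pw k (lenf k) a) - 1)"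
    by (rule last_conv_nth)
  then show ?thesis using Pw_closed_walk[OF assms(1,2)] assms(3) by simp
qed

lemma Pw_vertex_ge:
  assumes "1 \<le> a" "a \<le> Suc k" "v \<in> set (Pw k (lenf k) a)"
  shows "v = base \<or> a \<le> fst v"
  using assms(1,2)
proof (cases rule: Pw_shapes)
  case 1
  then show ?thesis using assms(3) by simp
next
  case 2
  have "v \<in> Vs k" using closed_walk_in_Vs[OF _ assms(3)] Pw_closed_walk[OF assms(1,2)] by blast
  then show ?thesis using 2 by (auto simp: Vs_iff)
next
  case 3
  then show ?thesis using assms(3) set_double_cycles[of v k a] by auto
qed

lemma Pw_nth_2:
  assumes "1 \<le> a" "a \<le> k"
  shows "Pw k (lenf k) a ! 2 = (a, 1) \<and> 2 < length (Pw k (lenf k) a)"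
  using assms(1) le_SucI[OF assms(2)]
proof (cases rule: Pw_shapes)
  case 1
  then show ?thesis using assms by simp
next
  case 2
  then show ?thesis using Pw1_prefix_nth(2,3)[of k] by (auto simp: nth_append)
next
  case 3
  then show ?thesis using double_cycles_nth_1[OF _ assms(2)] by (auto simp: nth_append)
qed

lemma Pw_suffix:
  assumes "1 \<le> i" "i < k"
  obtains A where "Pw k (lenf k) i = A @ double_cycles k (Suc i) @ [base]"
proof -
  have "i \<le> Suc k" using assms(2) by simp
  with assms(1) show thesis
  proof (cases rule: Pw_shapes)
  case 1
  then show ?thesis using assms by simp
next
  case 2
  then show ?thesis using that[of "Pw1_prefix k @ [base]"] by (simp add: numeral_2_eq_2)
next
  case 3
  then show ?thesis using that[of "[base] @ cw (lenf k) i @ cw (lenf k) i"] by (simp add: double_cycles_Cons)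
  qed
qed

lemma phi_base [simp]: "phi k base = base"
  by (simp add: phi_def)

lemma phi_pair: "1 \<le> a \<Longrightarrow> phi k (a, c) = Pw k (lenf k) a ! c"
  by (simp add: phi_def)

lemma phi_in_Vs:
  assumes "v \<in> Vs (Suc k)"
  shows "phi k v \<in> Vs k"
proof (cases "v = base")
  case False
  then obtain a c where v: "v = (a, c)" "1 \<le> a" "a \<le> Suc k" "c < length (Pw k (lenf k) a)"
    using assms by (cases v) (auto simp: Vs_iff)
  then show ?thesis using closed_walk_in_Vs[OF _ nth_mem[OF v(4)]] Pw_closed_walk[OF v(2,3)] phi_pair by simp
qed simp

lemma phi_edge:
  assumes "(v, w) \<in> Es (Suc k)"
  shows "(phi k v, phi k w) \<in> Es k"
proof -
  have "(phi k v, phi k w) \<in> Es k"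
    if a: "1 \<le> a" "a \<le> Suc k" "j < lenf (Suc k) a"
      and vw: "v = cw (lenf (Suc k)) a ! j" "w = cw (lenf (Suc k)) a ! (Suc j mod lenf (Suc k) a)"
    for a j
  proof -
    let ?P = "Pw k (lenf k) a"
    have P: "closed_walk k ?P" "?P ! 1 = base" "2 \<le> length ?P"
      using Pw_closed_walk[OF a(1,2)] lenf_ge_2[OF a(1,2)] by auto
    have "?P \<noteq> []" using P(3) by auto
    then have "?P ! 0 = base" by (rule closed_walk_nth_0[OF P(1)])
    show ?thesis
    proof (cases "Suc j < length ?P")
      case True
      then have "(?P ! j, ?P ! Suc j) \<in> Es k" using closed_walk_edge[OF P(1)] by simp
      moreover have "phi k v = ?P ! j"
        using a vw \<open>?P ! 0 = base\<close> nth_cw[of j "lenf (Suc k)" a] phi_pair by (cases "j = 0") simp_all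
      moreover have "phi k w = ?P ! Suc j"
        using a vw True nth_cw[of "Suc j" "lenf (Suc k)" a] phi_pair by simp
      ultimately show ?thesis by simp
    next
      case False
      then have "length ?P = Suc j" using a by simp
      then have "?P ! j = base" using Pw_nth_last[OF a(1,2)] by simp
      moreover have "j \<noteq> 0" using \<open>length ?P = Suc j\<close> P(3) by simp
      ultimately show ?thesis using a vw \<open>length ?P = Suc j\<close> nth_cw[of j "lenf (Suc k)" a] phi_pair by simp
    qed
  qed
  then show ?thesis using Es_cases[OF assms] by auto
qed

lemma phi_next_vtx:
  assumes "v \<in> Vs (Suc k)" "v \<noteq> base" "phi k v \<noteq> base"
  shows "phi k (next_vtx (Suc k) v) = next_vtx k (phi k v)"
proof -
  obtain a c where v: "v = (a, c)" "1 \<le> a" "a \<le> Suc k" "c < length (Pw k (lenf k) a)"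
    using assms by (cases v) (auto simp: Vs_iff)
  let ?P = "Pw k (lenf k) a"
  have P: "closed_walk k ?P" "last ?P = base" using Pw_closed_walk[OF v(2,3)] by auto
  have pv: "phi k v = ?P ! c" using v phi_pair by simp
  show ?thesis
  proof (cases "Suc c < length ?P")
    case True
    then have "phi k (next_vtx (Suc k) v) = ?P ! Suc c" using v phi_pair by (simp add: next_vtx_def)
    moreover have "?P ! Suc c = next_vtx k (?P ! c)"
      using Es_from_nonbase[OF _ closed_walk_edge[OF P(1) True]] assms(3) pv by simp
    ultimately show ?thesis using pv by simp
  next
    case False
    then have "length ?P = Suc c" using v by simp
    then have "?P ! c = base" using Pw_nth_last[OF v(2,3)] by simp
    then show ?thesis using pv assms(3) by simp
  qed
qed

lemma Xs_in_Vs: "z \<in> Xs \<Longrightarrow> z k \<in> Vs k"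
  by (simp add: Xs_def)

lemma Xs_phi: "z \<in> Xs \<Longrightarrow> phi k (z (Suc k)) = z k"
  by (simp add: Xs_def)

lemma Xs_nonbase_mono:
  assumes "z \<in> Xs" "z N \<noteq> base" "N \<le> k"
  shows "z k \<noteq> base"
  using assms(3)
proof (induction k rule: dec_induct)
  case (step k)
  then show ?case using Xs_phi[OF assms(1), of k] by auto
qed (use assms(2) in simp)

lemma Xs_eq_descend:
  assumes "y \<in> Xs" "y' \<in> Xs" "y (k + d) = y' (k + d)"
  shows "y k = y' k"
  using assms(3)
proof (induction d arbitrary: k)
  case (Suc d)
  then have "y (Suc k) = y' (Suc k)" by simp
  then show ?case using Xs_phi[OF assms(1), of k] Xs_phi[OF assms(2), of k] by simp
qed simp

lemma Xs_edge_descend: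
  assumes "z \<in> Xs" "y \<in> Xs" "(z (k + d), y (k + d)) \<in> Es (k + d)"
  shows "(z k, y k) \<in> Es k"
  using assms(3)
proof (induction d arbitrary: k)
  case (Suc d)
  then have "(z (Suc k), y (Suc k)) \<in> Es (Suc k)" by simp
  then show ?case using phi_edge Xs_phi[OF assms(1), of k] Xs_phi[OF assms(2), of k] by metis
qed simp

primrec project :: "nat \<Rightarrow> nat \<Rightarrow> vtx \<Rightarrow> vtx" where
  "project k 0 v = v"
| "project k (Suc d) v = phi k (project (Suc k) d v)"

lemma project_in_Vs: "v \<in> Vs (k + d) \<Longrightarrow> project k d v \<in> Vs k"
  by (induction d arbitrary: k) (auto intro: phi_in_Vs)

lemma successor_unique:
  assumes "z \<in> Xs" "y \<in> Xs" "\<forall>n. (z n, y n) \<in> Es n" "y' \<in> Xs" "\<forall>n. (z n, y' n) \<in> Es n"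
  shows "y = y'"
proof (cases "\<forall>k. z k = base")
  case True
  text \<open>From \<open>base\<close> one may stay or enter a cycle at \<open>(a, 1)\<close>, which projects to \<open>base\<close> again.\<close>
  have all_base: "w k = base" if w: "w \<in> Xs" "\<forall>n. (z n, w n) \<in> Es n" for w k
  proof -
    have "w (Suc k) = base \<or> (\<exists>a. 1 \<le> a \<and> a \<le> Suc k \<and> w (Suc k) = (a, 1))"
      using Es_from_base w(2) True by metis
    moreover have "phi k (a, 1) = base" if "1 \<le> a" "a \<le> Suc k" for a
      using Pw_closed_walk[OF that] phi_pair[OF that(1)] by simp
    ultimately have "phi k (w (Suc k)) = base" by auto
    then show "w k = base" using Xs_phi[OF w(1)] by simp
  qed
  show ?thesis using all_base[OF assms(2,3)] all_base[OF assms(4,5)] by auto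
next
  case False
  then obtain N where N: "z N \<noteq> base" by blast
  have "y k = y' k" if "N \<le> k" for k
    using Es_from_nonbase[OF Xs_nonbase_mono[OF assms(1) N that]] assms(3,5) by metis
  then have "y k = y' k" for k using Xs_eq_descend[OF assms(2,4), of k N] by simp
  then show ?thesis by auto
qed

lemma successor_exists:
  assumes z: "z \<in> Xs"
  shows "\<exists>y \<in> Xs. \<forall>n. (z n, y n) \<in> Es n"
proof (cases "\<forall>k. z k = base")
  case True
  then show ?thesis using z by (intro bexI[of _ z]) auto
next
  case False
  then obtain N where N: "z N \<noteq> base" by blast
  have nonbase: "z k \<noteq> base" if "N \<le> k" for k using Xs_nonbase_mono[OF z N that] .
  text \<open>Above level \<open>N\<close> the successor is forced; below it is obtained by projection.\<close>
  define y where "y k = (if N \<le> k then next_vtx k (z k) else project k (N - k) (next_vtx N (z N)))" for k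
  have "y k \<in> Vs k \<and> phi k (y (Suc k)) = y k" for k
  proof (cases "N \<le> k")
    case True
    have "phi k (next_vtx (Suc k) (z (Suc k))) = next_vtx k (z k)"
      using phi_next_vtx[OF Xs_in_Vs[OF z] nonbase] Xs_phi[OF z] nonbase[OF True] True by simp
    then show ?thesis
      using True next_vtx_in_Vs[OF Xs_in_Vs[OF z]] by (simp add: y_def)
  next
    case False
    define v where "v = next_vtx N (z N)"
    have v: "v \<in> Vs (k + (N - k))" using False next_vtx_in_Vs[OF Xs_in_Vs[OF z]] by (simp add: v_def)
    have "y (Suc k) = project (Suc k) (N - Suc k) v"
      using False by (cases "Suc k = N") (simp_all add: y_def v_def)
    moreover have "N - k = Suc (N - Suc k)" using False by simp
    ultimately show ?thesis using False project_in_Vs[OF v] by (simp add: y_def v_def)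
  qed
  then have "y \<in> Xs" by (simp add: Xs_def)
  moreover have "(z k, y k) \<in> Es k" if "N \<le> k" for k
    using next_vtx_in_Es[OF Xs_in_Vs[OF z] nonbase[OF that]] that by (simp add: y_def)
  ultimately show ?thesis using Xs_edge_descend[OF z] by (metis le_add2)
qed

lemma Tmap_in_Xs: "z \<in> Xs \<Longrightarrow> Tmap z \<in> Xs"
  and Tmap_edge: "z \<in> Xs \<Longrightarrow> (z n, Tmap z n) \<in> Es n"
proof -
  assume z: "z \<in> Xs"
  have "\<exists>!y. y \<in> Xs \<and> (\<forall>n. (z n, y n) \<in> Es n)"
    using successor_exists[OF z] successor_unique[OF z] by blast
  then have "Tmap z \<in> Xs \<and> (\<forall>n. (z n, Tmap z n) \<in> Es n)"
    unfolding Tmap_def by (rule theI')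
  then show "Tmap z \<in> Xs" "(z n, Tmap z n) \<in> Es n" by auto
qed

lemma funpow_Tmap_in_Xs: "z \<in> Xs \<Longrightarrow> (Tmap ^^ s) z \<in> Xs"
  by (induction s) (auto intro: Tmap_in_Xs)

lemma funpow_Tmap_along_cycle:
  assumes "z \<in> Xs" "z k = (a, c)" "1 \<le> a" "c + s < lenf k a"
  shows "((Tmap ^^ s) z) k = (a, c + s)"
  using assms(4)
proof (induction s)
  case (Suc s)
  then have "((Tmap ^^ s) z) k = (a, c + s)" by simp
  moreover have "Tmap ((Tmap ^^ s) z) k = next_vtx k (((Tmap ^^ s) z) k)"
    using Es_from_nonbase[OF _ Tmap_edge[OF funpow_Tmap_in_Xs[OF assms(1)], of s k]] calculation assms(3)
    by simp
  ultimately show ?case using Suc.prems assms(3) by (simp add: next_vtx_def)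
qed (use assms(2) in simp)

text \<open>One step of \<open>T\<close> moves \<open>(a, 1)\<close> to \<open>(a, 2)\<close> in \<open>G_k\<close>, and \<open>\<phi>_{k-1}\<close> maps \<open>(a, 2)\<close> to \<open>(a, 1)\<close>
  because \<open>P_{k-1,a}\<close> enters \<open>c_{k-1,a}\<close> at its second step; so the entry point of \<open>c_{\<cdot>,a}\<close> descends
  one level per step of \<open>T\<close>.\<close>
lemma funpow_Tmap_degree_le:
  assumes "z \<in> Xs" "z k = (a, 1)" "1 \<le> a" "a \<le> n" "n \<le> k"
  shows "\<exists>s. degv (((Tmap ^^ s) z) n) \<le> enat a"
  using assms
proof (induction k arbitrary: z)
  case 0
  then show ?case by simp
next
  case (Suc k)
  show ?case
  proof (cases "n = Suc k")
    case True
    then show ?thesis using Suc.prems by (intro exI[of _ 0]) (simp add: degv_def)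
  next
    case False
    then have k: "n \<le> k" "a \<le> k" using Suc.prems by auto
    have P2: "Pw k (lenf k) a ! 2 = (a, 1)" "2 < lenf (Suc k) a" using Pw_nth_2[OF Suc.prems(3) k(2)] by auto
    have "Tmap z (Suc k) = (a, 2)"
      using funpow_Tmap_along_cycle[OF Suc.prems(1,2,3), of 1] P2(2) by (simp add: numeral_2_eq_2)
    then have "Tmap z k = (a, 1)"
      using Xs_phi[OF Tmap_in_Xs[OF Suc.prems(1)], of k] phi_pair[OF Suc.prems(3)] P2(1) by simp
    then obtain s where "degv (((Tmap ^^ s) (Tmap z)) n) \<le> enat a"
      using Suc.IH[OF Tmap_in_Xs[OF Suc.prems(1)] _ Suc.prems(3,4) k(1)] by blast
    then show ?thesis by (metis funpow_Suc_right o_apply)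
  qed
qed

lemma degX_attained: "\<exists>K. degv (x K) = degX x"
proof -
  have "degX x \<in> range (\<lambda>k. degv (x k))"
    unfolding degX_def by (rule wellorder_InfI) blast
  then show ?thesis by auto
qed

lemma degX_le_degv: "degX x \<le> degv (x k)"
  unfolding degX_def by (rule INF_lower) simp

lemma degX_eventually_on_cycle:
  assumes "x \<in> Xs" "degX x = enat i"
  shows "1 \<le> i" "\<exists>K. \<forall>k\<ge>K. \<exists>c. x k = (i, c)"
proof -
  obtain K where "degv (x K) = enat i" using degX_attained assms(2) by metis
  then have xK: "x K = (i, snd (x K))" "x K \<noteq> base" by (auto simp: degv_def split: if_splits)
  then show i: "1 \<le> i" using Xs_in_Vs[OF assms(1), of K] by (metis Vs_iff fst_conv)
  have "\<exists>c. x k = (i, c)" if "K \<le> k" for k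
    using that
  proof (induction k rule: dec_induct)
    case base
    then show ?case using xK by blast
  next
    case (step k)
    have "x (Suc k) \<noteq> base" using Xs_nonbase_mono[OF assms(1) xK(2)] step by simp
    then obtain a c where ac: "x (Suc k) = (a, c)" "1 \<le> a" "a \<le> Suc k" "c < lenf (Suc k) a"
      using Xs_in_Vs[OF assms(1), of "Suc k"] by (cases "x (Suc k)") (auto simp: Vs_iff)
    have "i \<le> a" using degX_le_degv[of x "Suc k"] assms(2) ac by (simp add: degv_def)
    moreover have "a \<le> i"
    proof -
      have "x k = Pw k (lenf k) a ! c" using Xs_phi[OF assms(1), of k] ac phi_pair by simp
      then show ?thesis using Pw_vertex_ge[OF ac(2,3), of "x k"] ac(4) step.IH i by auto
    qed
    ultimately show ?case using ac by auto
  qed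
  then show "\<exists>K. \<forall>k\<ge>K. \<exists>c. x k = (i, c)" by blast
qed

text \<open>\<open>lenf k i - c\<close> is the number of steps from \<open>(i, c)\<close> back to \<open>v_{k,0}\<close>. It grows with \<open>k\<close>
  because \<open>P_{k,i}\<close> does not end right after a traversal of \<open>c_{k,i}\<close>.\<close>
lemma time_to_base_grows:
  assumes "x \<in> Xs" "1 \<le> i" "x k = (i, c)" "x (Suc k) = (i, c')"
  shows "lenf k i - c < lenf (Suc k) i - c'"
proof -
  let ?P = "Pw k (lenf k) i"
  have c: "i \<le> k" "c < lenf k i" using Xs_in_Vs[OF assms(1), of k] assms(2,3) by (auto simp: Vs_iff)
  have c': "c' < length ?P" using Xs_in_Vs[OF assms(1), of "Suc k"] assms(2,4) by (auto simp: Vs_iff)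
  have P: "closed_walk k ?P" "last ?P = base" using Pw_closed_walk[of i k] c(1) assms(2) by auto
  have "?P ! c' = (i, c)" using Xs_phi[OF assms(1), of k] assms phi_pair by simp
  then have "c' + (lenf k i - c - 1) < length ?P - 1"
    using closed_walk_follows_cycle[OF P c' _ assms(2), of c "lenf k i - c - 1"] c(2) by simp
  then show ?thesis using c by simp
qed

lemma time_to_base_unbounded:
  assumes "x \<in> Xs" "1 \<le> i" "\<forall>k\<ge>K. \<exists>c. x k = (i, c)"
  shows "d \<le> lenf (K + d) i - snd (x (K + d))"
proof (induction d)
  case (Suc d)
  obtain c c' where "x (K + d) = (i, c)" "x (Suc (K + d)) = (i, c')" using assms(3) by fastforce
  then show ?case using Suc.IH time_to_base_grows[OF assms(1,2)] by fastforce
qed simp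

text \<open>Running along \<open>c_{M+1,i}\<close>, the image in \<open>G_M\<close> follows \<open>P_{M,i}\<close>, which after its last
  visit to \<open>c_{M,i}\<close> enters \<open>c_{M,i+1}\<close>.\<close>
lemma funpow_Tmap_enters_next_cycle:
  assumes "x \<in> Xs" "1 \<le> i" "i < M" "x M = (i, c)" "x (Suc M) = (i, c')"
  shows "\<exists>t \<ge> lenf M i - c. ((Tmap ^^ t) x) M = (Suc i, 1)"
proof -
  let ?P = "Pw M (lenf M) i"
  obtain A where A: "?P = A @ double_cycles M (Suc i) @ [base]" using Pw_suffix[OF assms(2,3)] .
  have D: "double_cycles M (Suc i) ! 1 = (Suc i, 1)" "1 < length (double_cycles M (Suc i))"
    using double_cycles_nth_1[of "Suc i" M] assms(3) by auto
  have c: "c < lenf M i" using Xs_in_Vs[OF assms(1), of M] assms(2,4) by (auto simp: Vs_iff)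
  have c': "c' < length ?P" using Xs_in_Vs[OF assms(1), of "Suc M"] assms(2,5) by (auto simp: Vs_iff)
  have P: "closed_walk M ?P" "last ?P = base" using Pw_closed_walk[of i M] assms(2,3) by auto
  have "?P ! c' = (i, c)" using Xs_phi[OF assms(1), of M] assms phi_pair by simp
  then have walk: "c' + (lenf M i - c - 1) < length ?P - 1 \<and>
      ?P ! (c' + (lenf M i - c - 1)) = (i, lenf M i - 1)"
    using closed_walk_follows_cycle[OF P c' _ assms(2), of c "lenf M i - c - 1"] c by simp
  have "c' + (lenf M i - c - 1) < length A"
  proof (rule ccontr)
    assume "\<not> ?thesis"
    then obtain q where "c' + (lenf M i - c - 1) = length A + q" by (metis le_add_diff_inverse not_less)
    then have "q < length (double_cycles M (Suc i))" "double_cycles M (Suc i) ! q = (i, lenf M i - 1)"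
      using walk A by (auto simp: nth_append)
    then have "(i, lenf M i - 1) \<in> set (double_cycles M (Suc i))" by (metis nth_mem)
    then show False using set_double_cycles[of "(i, lenf M i - 1)" M "Suc i"] assms(2) by auto
  qed
  then obtain t where t: "c' + t = Suc (length A)" "lenf M i - c \<le> t"
    using c by (intro that[of "Suc (length A) - c'"]) auto
  then have "((Tmap ^^ t) x) (Suc M) = (i, Suc (length A))"
    using funpow_Tmap_along_cycle[OF assms(1,5,2), of t] A D(2) by force
  then have "((Tmap ^^ t) x) M = ?P ! Suc (length A)"
    using Xs_phi[OF funpow_Tmap_in_Xs[OF assms(1)]] phi_pair[OF assms(2)] by metis
  also have "\<dots> = (Suc i, 1)" using A D by (simp add: nth_append)
  finally show ?thesis using t(2) by blast
qed

theorem lemma3p9: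
  fixes x :: "nat \<Rightarrow> nat \<times> nat" and i n :: nat
  assumes "x \<in> Xs" and "degX x = enat i" and "n > i"
  shows "\<forall>m. (INF j\<in>{m..}. degv (((Tmap ^^ j) x) n)) \<le> enat (i + 1)"
proof
  fix m
  have i: "1 \<le> i" using degX_eventually_on_cycle(1)[OF assms(1,2)] .
  obtain K where K: "\<forall>k\<ge>K. \<exists>c. x k = (i, c)" using degX_eventually_on_cycle(2)[OF assms(1,2)] by blast
  define M where "M = K + (m + n)"
  obtain c c' where c: "x M = (i, c)" "x (Suc M) = (i, c')" using K by (fastforce simp: M_def)
  have "m \<le> lenf M i - c"
    using time_to_base_unbounded[OF assms(1) i K, of "m + n"] c(1) by (simp add: M_def)
  moreover obtain t where t: "lenf M i - c \<le> t" "((Tmap ^^ t) x) M = (Suc i, 1)"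
    using funpow_Tmap_enters_next_cycle[OF assms(1) i _ c] assms(3) by (auto simp: M_def)
  moreover have "\<exists>s. degv (((Tmap ^^ s) ((Tmap ^^ t) x)) n) \<le> enat (Suc i)"
    using funpow_Tmap_degree_le[OF funpow_Tmap_in_Xs[OF assms(1)] t(2), of n] assms(3) by (simp add: M_def)
  then obtain s where "degv (((Tmap ^^ s) ((Tmap ^^ t) x)) n) \<le> enat (Suc i)" ..
  ultimately have "s + t \<in> {m..}" "degv (((Tmap ^^ (s + t)) x) n) \<le> enat (i + 1)"
    by (simp_all add: funpow_add)
  then show "(INF j\<in>{m..}. degv (((Tmap ^^ j) x) n)) \<le> enat (i + 1)"
    by (meson INF_lower order_trans)
qed

end
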